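(* For any positive integer $n$ there exists an $n$-vertex graph which is $(2^{r+8}\log n,\, r)$-locally Ramsey for all $r$.
   Context: All logarithms are base $2$. For a graph $G$ and reals $m,r>0$ (not necessarily integers), $G$ is called $(m,r)$-locally Ramsey if every set of at least $m$ vertices of $G$ contains both a clique and an independent set of size at least $r$. *)

theory Defs
  imports Complex_Main
begin

definition simple_graph :: "'a set \<Rightarrow> ('a \<Rightarrow> 'a \<Rightarrow> bool) \<Rightarrow> bool" where
  "simple_graph V E \<longleftrightarrow> finite V \<and>
     (\<forall>u\<in>V. \<forall>v\<in>V. E u v \<longrightarrow> E v u) \<and> (\<forall>v\<in>V. \<not> E v v)"

definition is_clique :: "('a \<Rightarrow> 'a \<Rightarrow> bool) \<Rightarrow> 'a set \<Rightarrow> bool" where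
  "is_clique E K \<longleftrightarrow> (\<forall>u\<in>K. \<forall>v\<in>K. u \<noteq> v \<longrightarrow> E u v)"

definition is_indep :: "('a \<Rightarrow> 'a \<Rightarrow> bool) \<Rightarrow> 'a set \<Rightarrow> bool" where
  "is_indep E I \<longleftrightarrow> (\<forall>u\<in>I. \<forall>v\<in>I. \<not> E u v)"

definition locally_ramsey :: "'a set \<Rightarrow> ('a \<Rightarrow> 'a \<Rightarrow> bool) \<Rightarrow> real \<Rightarrow> real \<Rightarrow> bool" where
  "locally_ramsey V E m r \<longleftrightarrow>
     (\<forall>S\<subseteq>V. real (card S) \<ge> m \<longrightarrow>
        (\<exists>K\<subseteq>S. is_clique E K \<and> real (card K) \<ge> r) \<and>
        (\<exists>I\<subseteq>S. is_indep E I \<and> real (card I) \<ge> r))"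

end

theory Submission
  imports Defs "HOL-Probability.Probability"
begin

text \<open>Colour the pairs of vertices by independent fair coins. For a vertex set A of size k
  with N = k(k-1)/2 pairs, Hoeffding's inequality bounds the probability that the number of edges
  inside A differs from N/2 by more than sqrt(N((k+1) ln n + ln 2)/2) by n^-(k+1). Summed over all
  A this is at most e/n < 1, so some colouring is balanced on every vertex set at once, and so is
  its complement. Then every k-set spans at least k(k-1)/4 - O(k sqrt(k log n)) edges, so it has a
  vertex with at least (k-1)/2 - sqrt(2 k log n) neighbours inside it. Moving into such a
  neighbourhood r - 1 times keeps a nonempty set as long as one starts with about 2^r log n
  vertices, and the chosen vertices form a clique; the complement gives independent sets.\<close>

text \<open>Edges are counted as ordered pairs, so the main term k(k-1)/2 is half of all ordered pairs.\<close>

definition half_dense :: "'a set \<Rightarrow> ('a \<Rightarrow> 'a \<Rightarrow> bool) \<Rightarrow> real \<Rightarrow> bool" where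
  "half_dense V E l \<longleftrightarrow> (\<forall>A\<subseteq>V.
     real (card A) * (real (card A) - 1) / 2 - real (card A) * sqrt (2 * real (card A) * l)
       \<le> real (card {(u, v) \<in> A \<times> A. E u v}))"

lemma half_denseD:
  "half_dense V E l \<Longrightarrow> A \<subseteq> V \<Longrightarrow>
     real (card A) * (real (card A) - 1) / 2 - real (card A) * sqrt (2 * real (card A) * l)
       \<le> real (card {(u, v) \<in> A \<times> A. E u v})"
  unfolding half_dense_def by blast

lemma card_edges_eq_sum_degrees:
  assumes "finite A"
  shows "card {(u, v) \<in> A \<times> A. E u v} = (\<Sum>u\<in>A. card {v \<in> A. E u v})"
proof -
  have "{(u, v) \<in> A \<times> A. E u v} = (SIGMA u:A. {v \<in> A. E u v})" by auto
  then show ?thesis using assms by simp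
qed

lemma exists_degree_ge_average:
  assumes "finite A" "A \<noteq> {}"
  obtains u where "u \<in> A" "card {(u, v) \<in> A \<times> A. E u v} \<le> card A * card {v \<in> A. E u v}"
proof (rule ccontr)
  assume "\<not> thesis"
  with that have "\<forall>u\<in>A. card A * card {v \<in> A. E u v} < card {(u, v) \<in> A \<times> A. E u v}"
    by (meson not_le)
  then have "(\<Sum>u\<in>A. card A * card {v \<in> A. E u v}) < (\<Sum>u\<in>A. card {(u, v) \<in> A \<times> A. E u v})"
    using assms by (intro sum_strict_mono) auto
  also have "\<dots> = (\<Sum>u\<in>A. card A * card {v \<in> A. E u v})"
    using card_edges_eq_sum_degrees[OF assms(1), of E] by (simp add: sum_distrib_left)
  finally show False by simp
qed

fun greedy_bound :: "nat \<Rightarrow> real" where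
  "greedy_bound 0 = 1"
| "greedy_bound (Suc j) = sqrt 2 * (greedy_bound j + 2)"

lemma greedy_bound_ge_1: "1 \<le> greedy_bound j"
  by (induction j) (auto intro: order.trans[OF _ mult_right_mono[of 1 "sqrt 2"]])

lemma greedy_bound_le: "greedy_bound j + 7 \<le> 8 * sqrt 2 ^ j"
proof (induction j)
  case (Suc j)
  have "7 \<le> sqrt 2 * 5"
    using real_le_rsqrt[of "1.4" 2] by (simp add: power2_eq_square)
  then have "greedy_bound (Suc j) + 7 \<le> sqrt 2 * (greedy_bound j + 7)"
    by (simp add: algebra_simps)
  also have "\<dots> \<le> sqrt 2 * (8 * sqrt 2 ^ j)"
    using Suc by (intro mult_left_mono) auto
  finally show ?case by simp
qed simp

lemma greedy_bound_sq_le: "(greedy_bound j)\<^sup>2 \<le> 64 * 2 ^ j"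
proof -
  have "(greedy_bound j)\<^sup>2 \<le> (8 * sqrt 2 ^ j)\<^sup>2"
    using greedy_bound_le[of j] greedy_bound_ge_1[of j] by (intro power_mono) auto
  moreover have "(sqrt 2 ^ j)\<^sup>2 = (sqrt 2 ^ 2) ^ j"
    by (simp only: power_mult[symmetric] mult.commute)
  ultimately show ?thesis
    by (simp add: power_mult_distrib)
qed

lemma greedy_step_ineq:
  fixes a l s :: real
  assumes l: "1 \<le> l" and s: "1 \<le> s" and a: "l * (sqrt 2 * (s + 2))\<^sup>2 \<le> a"
  shows "l * s\<^sup>2 \<le> (a - 1) / 2 - sqrt (2 * a * l)"
proof -
  define t where "t = sqrt (2 * a * l)"
  have "0 \<le> a" using a l by (smt (verit) mult_nonneg_nonneg zero_le_power2)
  then have "0 \<le> a * l" using l by (intro mult_nonneg_nonneg) auto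
  then have t_sq: "t\<^sup>2 = 2 * a * l" by (simp add: t_def)
  have "(2 * l * (s + 2))\<^sup>2 = 2 * l * (l * (sqrt 2 * (s + 2))\<^sup>2)"
    by (simp add: power_mult_distrib) (simp add: power2_eq_square)
  also have "\<dots> \<le> t\<^sup>2"
    using mult_left_mono[OF a, of "2 * l"] l t_sq by (simp add: mult.commute mult.left_commute)
  finally have t_ge: "2 * l * (s + 2) \<le> t"
    by (rule power2_le_imp_le) (simp add: t_def \<open>0 \<le> a * l\<close>)
  have "0 \<le> t" by (simp add: t_def \<open>0 \<le> a * l\<close>)
  with t_ge l s have "2 * l * (s + 2) * (2 * l * s) \<le> t * (t - 4 * l)"
    by (intro mult_mono) (auto simp: algebra_simps)
  moreover have "2 * l \<le> 8 * l * (l * s)"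
    using l s by (smt (verit) mult_le_cancel_left1 mult_mono)
  ultimately have "4 * l * (l * s\<^sup>2) \<le> 4 * l * ((a - 1) / 2 - t)"
    using t_sq by (simp add: power2_eq_square algebra_simps)
  then show ?thesis using l by (simp add: t_def)
qed

lemma half_dense_exists_large_neighbourhood:
  assumes dense: "half_dense V E l" and A: "A \<subseteq> V" "finite A" "A \<noteq> {}"
  obtains u where "u \<in> A" "(real (card A) - 1) / 2 - sqrt (2 * real (card A) * l) \<le> card {v \<in> A. E u v}"
proof -
  define k where "k = real (card A)"
  obtain u where u: "u \<in> A"
    and deg: "card {(u, v) \<in> A \<times> A. E u v} \<le> card A * card {v \<in> A. E u v}"
    using exists_degree_ge_average[OF A(2,3), where E = E] by blast
  have "k * (k - 1) / 2 - k * sqrt (2 * k * l) \<le> card {(u, v) \<in> A \<times> A. E u v}"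
    unfolding k_def by (rule half_denseD[OF dense A(1)])
  also have "\<dots> \<le> k * card {v \<in> A. E u v}"
    unfolding k_def of_nat_mult[symmetric] of_nat_le_iff by (rule deg)
  finally have "k * ((k - 1) / 2 - sqrt (2 * k * l)) \<le> k * card {v \<in> A. E u v}"
    by (simp add: right_diff_distrib)
  moreover have "0 < k" using A(2,3) by (simp add: k_def card_gt_0_iff)
  ultimately show thesis using that[OF u] by (simp add: k_def)
qed

lemma is_clique_insert:
  "is_clique E K \<Longrightarrow> (\<And>v. v \<in> K \<Longrightarrow> E u v \<and> E v u) \<Longrightarrow> is_clique E (insert u K)"
  unfolding is_clique_def by blast

lemma half_dense_clique:
  assumes G: "simple_graph V E" and dense: "half_dense V E l" and l: "1 \<le> l"
  shows "A \<subseteq> V \<Longrightarrow> l * (greedy_bound j)\<^sup>2 \<le> card A \<Longrightarrow> \<exists>K\<subseteq>A. is_clique E K \<and> Suc j \<le> card K"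
proof (induction j arbitrary: A)
  case 0
  then obtain u where "u \<in> A" using l by fastforce
  then show ?case by (intro exI[of _ "{u}"]) (auto simp: is_clique_def)
next
  case (Suc j)
  have "1 * 1 \<le> l * (greedy_bound (Suc j))\<^sup>2"
    using l greedy_bound_ge_1[of "Suc j"] by (intro mult_mono) (auto simp: one_le_power)
  then have "A \<noteq> {}" using Suc.prems(2) by auto
  moreover have fin: "finite A"
    using G Suc.prems(1) rev_finite_subset unfolding simple_graph_def by blast
  ultimately obtain u where u: "u \<in> A"
    and N: "(real (card A) - 1) / 2 - sqrt (2 * real (card A) * l) \<le> card {v \<in> A. E u v}"
    using half_dense_exists_large_neighbourhood[OF dense Suc.prems(1)] by blast
  have "l * (greedy_bound j)\<^sup>2 \<le> (real (card A) - 1) / 2 - sqrt (2 * real (card A) * l)"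
    using greedy_step_ineq[OF l greedy_bound_ge_1] Suc.prems(2) by simp
  with N have "l * (greedy_bound j)\<^sup>2 \<le> card {v \<in> A. E u v}" by linarith
  moreover have "{v \<in> A. E u v} \<subseteq> V" using Suc.prems(1) by auto
  ultimately obtain K where K: "K \<subseteq> {v \<in> A. E u v}" "is_clique E K" "Suc j \<le> card K"
    using Suc.IH by blast
  have uV: "u \<in> V" using u Suc.prems(1) by blast
  have "\<not> E u u" using G uV by (simp add: simple_graph_def)
  then have "u \<notin> K" using K(1) by blast
  moreover have "finite K" using K(1) fin by (simp add: finite_subset)
  ultimately have "Suc (Suc j) \<le> card (insert u K)" using K(3) by simp
  moreover have "\<And>v. v \<in> K \<Longrightarrow> E u v \<and> E v u"
    using G uV K(1) Suc.prems(1) unfolding simple_graph_def by blast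
  with K(2) have "is_clique E (insert u K)" by (rule is_clique_insert)
  ultimately show ?case using K(1) u by blast
qed

lemma half_dense_clique_powr:
  assumes G: "simple_graph V E" and dense: "half_dense V E l" and l: "1 \<le> l"
    and r: "0 < r" and S: "S \<subseteq> V" and big: "2 powr (r + 6) * l \<le> card S"
  shows "\<exists>K\<subseteq>S. is_clique E K \<and> r \<le> card K"
proof -
  define j where "j = nat \<lceil>r\<rceil> - 1"
  have "real (Suc j) = of_int \<lceil>r\<rceil>" using r by (simp add: j_def)
  then have j: "real j < r" "r \<le> Suc j" by linarith+
  have "l * (greedy_bound j)\<^sup>2 \<le> l * (64 * 2 ^ j)"
    using l greedy_bound_sq_le by (intro mult_left_mono) auto
  also have "64 * 2 ^ j = (2::real) powr (j + 6)"
    by (simp add: powr_add powr_realpow)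
  also have "l * \<dots> \<le> 2 powr (r + 6) * l"
    using j l by (simp add: mult.commute)
  also note big
  finally obtain K where "K \<subseteq> S" "is_clique E K" "Suc j \<le> card K"
    using half_dense_clique[OF G dense l S] by blast
  with j show ?thesis by (intro exI[of _ K]) auto
qed

definition pairs_in :: "'a::linorder set \<Rightarrow> ('a \<times> 'a) set" where
  "pairs_in A = {(u, v) \<in> A \<times> A. u < v}"

lemma finite_pairs_in: "finite A \<Longrightarrow> finite (pairs_in A)"
  by (rule finite_subset[of _ "A \<times> A"]) (auto simp: pairs_in_def)

lemma pairs_in_mono: "A \<subseteq> B \<Longrightarrow> pairs_in A \<subseteq> pairs_in B"
  by (auto simp: pairs_in_def)

lemma card_symmetric_edges:
  fixes R :: "'a::linorder \<Rightarrow> 'a \<Rightarrow> bool"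
  assumes fin: "finite A" and sym: "\<And>u v. R u v \<Longrightarrow> R v u" and irrefl: "\<And>v. \<not> R v v"
  shows "card {(u, v) \<in> A \<times> A. R u v} = 2 * card {(u, v) \<in> pairs_in A. R u v}"
proof -
  define L where "L = {(u, v) \<in> pairs_in A. R u v}"
  have "finite L" by (rule finite_subset[OF _ finite_pairs_in[OF fin]]) (auto simp: L_def)
  have "{(u, v) \<in> A \<times> A. R u v} = L \<union> prod.swap ` L"
    using sym irrefl by (auto simp: L_def pairs_in_def image_iff) (metis linorder_neqE)
  moreover have "L \<inter> prod.swap ` L = {}" by (auto simp: L_def pairs_in_def)
  ultimately have "card {(u, v) \<in> A \<times> A. R u v} = card L + card (prod.swap ` L)"
    using \<open>finite L\<close> by (simp add: card_Un_disjoint)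
  then show ?thesis by (simp add: card_image L_def)
qed

lemma card_pairs_in:
  assumes fin: "finite A"
  shows "2 * card (pairs_in A) = card A * (card A - 1)"
proof -
  have "card {(u, v) \<in> A \<times> A. u \<noteq> v} = (\<Sum>u\<in>A. card (A - {u}))"
    using card_edges_eq_sum_degrees[OF fin, of "(\<noteq>)"]
    by (simp add: set_diff_eq conj_commute eq_commute[of _ "_::'a"])
  also have "\<dots> = card A * (card A - 1)" using fin by simp
  moreover have "{(u, v) \<in> pairs_in A. u \<noteq> v} = pairs_in A" by (auto simp: pairs_in_def)
  ultimately show ?thesis using card_symmetric_edges[OF fin, of "(\<noteq>)"] by simp
qed

lemma real_card_pairs_in:
  "finite A \<Longrightarrow> real (card (pairs_in A)) = real (card A) * (real (card A) - 1) / 2"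
  using card_pairs_in[of A] by (cases "card A") (auto simp: field_simps simp flip: of_nat_mult)

definition graph_of :: "('a::linorder \<times> 'a \<Rightarrow> bool) \<Rightarrow> 'a \<Rightarrow> 'a \<Rightarrow> bool" where
  "graph_of f u v \<longleftrightarrow> u \<noteq> v \<and> f (min u v, max u v)"

lemma simple_graph_graph_of: "finite V \<Longrightarrow> simple_graph V (graph_of f)"
  by (auto simp: simple_graph_def graph_of_def min.commute max.commute)

lemma is_indep_if_is_clique_complement:
  "is_clique (graph_of (\<lambda>x. \<not> f x)) K \<Longrightarrow> is_indep (graph_of f) K"
  by (auto simp: is_clique_def is_indep_def graph_of_def)

lemma card_edges_graph_of:
  assumes "finite A"
  shows "card {(u, v) \<in> A \<times> A. graph_of f u v} = 2 * card {x \<in> pairs_in A. f x}"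
proof -
  have "card {(u, v) \<in> A \<times> A. graph_of f u v} = 2 * card {(u, v) \<in> pairs_in A. graph_of f u v}"
    by (rule card_symmetric_edges[OF assms]) (auto simp: graph_of_def min.commute max.commute)
  also have "{(u, v) \<in> pairs_in A. graph_of f u v} = {x \<in> pairs_in A. f x}"
    by (auto simp: pairs_in_def graph_of_def)
  finally show ?thesis .
qed

text \<open>Chosen so that Hoeffding's bound 2 exp(-2 d^2 / card (pairs_in A)) is n^-(card A + 1);
  summed over all A this gives (1 + 1/n)^n / n \<le> e / n.\<close>

definition edge_deviation :: "nat \<Rightarrow> nat set \<Rightarrow> real" where
  "edge_deviation n A =
     sqrt (real (card (pairs_in A)) * ((card A + 1) * ln (real n) + ln 2) / 2)"

lemma edge_deviation_nonneg: "1 \<le> n \<Longrightarrow> 0 \<le> edge_deviation n A"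
  unfolding edge_deviation_def by auto

lemma edge_deviation_sq:
  "1 \<le> n \<Longrightarrow> (edge_deviation n A)\<^sup>2 =
     real (card (pairs_in A)) * ((card A + 1) * ln (real n) + ln 2) / 2"
  unfolding edge_deviation_def by (intro real_sqrt_pow2) auto

definition edge_balanced :: "nat \<Rightarrow> (nat \<times> nat \<Rightarrow> bool) \<Rightarrow> bool" where
  "edge_balanced n f \<longleftrightarrow> (\<forall>A\<subseteq>{0..<n}.
     \<bar>real (card {x \<in> pairs_in A. f x}) - real (card (pairs_in A)) / 2\<bar> \<le> edge_deviation n A)"

lemma edge_balanced_complement:
  assumes "edge_balanced n f"
  shows "edge_balanced n (\<lambda>x. \<not> f x)"
  unfolding edge_balanced_def
proof (intro allI impI)
  fix A :: "nat set" assume A: "A \<subseteq> {0..<n}"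
  define P where "P = pairs_in A"
  have fin: "finite P"
    unfolding P_def by (rule finite_pairs_in[OF finite_subset[OF A finite_atLeastLessThan]])
  have "{x \<in> P. \<not> f x} = P - {x \<in> P. f x}" by blast
  then have "card {x \<in> P. \<not> f x} = card P - card {x \<in> P. f x}"
    using fin by (simp add: card_Diff_subset)
  moreover have "card {x \<in> P. f x} \<le> card P" using fin by (intro card_mono) auto
  moreover have "\<bar>real (card {x \<in> P. f x}) - real (card P) / 2\<bar> \<le> edge_deviation n A"
    using assms A unfolding edge_balanced_def P_def by blast
  ultimately show "\<bar>real (card {x \<in> pairs_in A. \<not> f x}) - real (card (pairs_in A)) / 2\<bar>
      \<le> edge_deviation n A"
    unfolding P_def[symmetric] by (auto simp: of_nat_diff abs_le_iff)
qed

lemma log2_ge_ln: "1 \<le> x \<Longrightarrow> ln x \<le> log 2 x"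
  using ln_2_less_1 by (simp add: log_def divide_simps mult_left_le)

lemma two_edge_deviation_le:
  assumes n: "2 \<le> n" and A: "finite A"
  shows "2 * edge_deviation n A \<le> card A * sqrt (2 * card A * log 2 n)"
proof -
  define k where "k = real (card A)"
  define l where "l = log 2 (real n)"
  define c where "c = (k + 1) * ln (real n) + ln 2"
  have l: "1 \<le> l" using n by (simp add: l_def)
  have "0 \<le> ln (real n)" "ln (real n) \<le> l"
    using n log2_ge_ln[of n] by (auto simp: l_def)
  then have c: "c \<le> (k + 2) * l"
    using l ln_2_less_1 mult_left_mono[of "ln n" l "k + 1"]
    by (auto simp: c_def k_def algebra_simps)
  have "k * k \<le> k * k\<^sup>2"
    by (cases "card A") (auto simp: k_def power2_eq_square)
  then have cubic: "k * (k - 1) * (k + 2) \<le> 2 * k ^ 3"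
    by (simp add: k_def power2_eq_square power3_eq_cube algebra_simps)
  have "(2 * edge_deviation n A)\<^sup>2 = 4 * (real (card (pairs_in A)) * c / 2)"
    using edge_deviation_sq[of n A] n by (simp add: c_def k_def power_mult_distrib algebra_simps)
  also have "\<dots> = k * (k - 1) * c"
    using real_card_pairs_in[OF A] by (simp add: k_def)
  also have "\<dots> \<le> k * (k - 1) * ((k + 2) * l)"
  proof (rule mult_left_mono)
    show "0 \<le> k * (k - 1)" by (cases "card A") (simp_all add: k_def)
  qed (rule c)
  also have "\<dots> \<le> 2 * k ^ 3 * l"
    using cubic l by (simp add: mult.assoc[symmetric])
  also have "\<dots> = (k * sqrt (2 * k * l))\<^sup>2"
    using l by (simp add: k_def power_mult_distrib power3_eq_cube power2_eq_square)
  finally have "2 * edge_deviation n A \<le> k * sqrt (2 * k * l)"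
    by (rule power2_le_imp_le) (use l in \<open>simp add: k_def\<close>)
  then show ?thesis by (simp add: k_def l_def)
qed

lemma half_dense_graph_of:
  assumes n: "2 \<le> n" and balanced: "edge_balanced n f"
  shows "half_dense {0..<n} (graph_of f) (log 2 n)"
  unfolding half_dense_def
proof (intro allI impI)
  fix A assume A: "A \<subseteq> {0..<n}"
  then have fin: "finite A" by (rule finite_subset) simp
  have "\<bar>real (card {x \<in> pairs_in A. f x}) - real (card (pairs_in A)) / 2\<bar> \<le> edge_deviation n A"
    using balanced A unfolding edge_balanced_def by blast
  then have "real (card (pairs_in A)) / 2 - edge_deviation n A \<le> card {x \<in> pairs_in A. f x}"
    by (simp add: abs_le_iff)
  then show "real (card A) * (real (card A) - 1) / 2 - real (card A) * sqrt (2 * real (card A) * log 2 n)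
      \<le> real (card {(u, v) \<in> A \<times> A. graph_of f u v})"
    using two_edge_deviation_le[OF n fin] card_edges_graph_of[OF fin, of f] real_card_pairs_in[OF fin]
    by simp
qed

abbreviation fair_coins :: "'a set \<Rightarrow> ('a \<Rightarrow> bool) pmf" where
  "fair_coins P \<equiv> Pi_pmf P False (\<lambda>_. bernoulli_pmf (1/2))"

lemma prob_count_deviation_ge:
  fixes P Q :: "'a set" and \<delta> :: real
  assumes "finite P" "Q \<subseteq> P" "Q \<noteq> {}" "0 \<le> \<delta>"
  shows "measure_pmf.prob (fair_coins P)
           {f. \<delta> \<le> \<bar>real (card {x\<in>Q. f x}) - real (card Q) / 2\<bar>}
         \<le> 2 * exp (-2 * \<delta>\<^sup>2 / card Q)"
proof -
  let ?count = "\<lambda>f. card {x\<in>Q. f x}"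
  have finQ: "finite Q" using assms(2,1) by (rule finite_subset)
  have "binomial_pmf (card Q) (1/2) = map_pmf ?count (fair_coins Q)"
    by (rule binomial_pmf_altdef') (use finQ in auto)
  also have "fair_coins Q = map_pmf (\<lambda>f x. if x \<in> Q then f x else False) (fair_coins P)"
    by (rule Pi_pmf_subset) (use assms in auto)
  also have "map_pmf ?count \<dots> = map_pmf ?count (fair_coins P)"
    unfolding map_pmf_comp by (intro map_pmf_cong refl) (metis (mono_tags, lifting))
  finally have binomial: "binomial_pmf (card Q) (1/2) = map_pmf ?count (fair_coins P)" .
  have "measure_pmf.prob (fair_coins P) {f. \<delta> \<le> \<bar>real (?count f) - real (card Q) / 2\<bar>}
      = measure_pmf.prob (binomial_pmf (card Q) (1/2)) {k. \<delta> \<le> \<bar>real k - card Q * (1/2)\<bar>}"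
    unfolding binomial measure_map_pmf by (simp add: vimage_def)
  also have "\<dots> \<le> 2 * exp (-2 * \<delta>\<^sup>2 / card Q)"
    using binomial_distribution.prob_abs_ge[of "1/2" "card Q" \<delta>] assms finQ
    by (simp add: binomial_distribution_def card_gt_0_iff)
  finally show ?thesis .
qed

lemma prob_unbalanced_le:
  assumes n: "2 \<le> n" and A: "A \<subseteq> {0..<n}"
  shows "measure_pmf.prob (fair_coins (pairs_in {0..<n}))
           {f. edge_deviation n A < \<bar>real (card {x \<in> pairs_in A. f x}) - real (card (pairs_in A)) / 2\<bar>}
         \<le> (1 / n) ^ (card A + 1)"
    (is "measure_pmf.prob ?M ?bad \<le> _")
proof (cases "pairs_in A = {}")
  case True
  then show ?thesis by (simp add: edge_deviation_def)
next
  case False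
  define c where "c = (card A + 1) * ln (real n) + ln 2"
  have exp_c: "exp c = real n ^ (card A + 1) * 2"
    unfolding c_def exp_add exp_of_nat_mult using n by simp
  have "measure_pmf.prob ?M ?bad
      \<le> measure_pmf.prob ?M {f. edge_deviation n A \<le> \<bar>real (card {x \<in> pairs_in A. f x}) - real (card (pairs_in A)) / 2\<bar>}"
    by (intro measure_pmf.finite_measure_mono) auto
  also have "\<dots> \<le> 2 * exp (-2 * (edge_deviation n A)\<^sup>2 / card (pairs_in A))"
    using False A n by (intro prob_count_deviation_ge finite_pairs_in pairs_in_mono edge_deviation_nonneg)
      auto
  also have "-2 * (edge_deviation n A)\<^sup>2 / card (pairs_in A) = - c"
    using False A finite_pairs_in[of A] finite_subset[OF A] edge_deviation_sq[of n A] n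
    by (simp add: c_def field_simps)
  also have "2 * exp (- c) = (1 / n) ^ (card A + 1)"
    using exp_c by (simp add: exp_minus power_one_over inverse_eq_divide)
  finally show ?thesis .
qed

lemma measure_pmf_exists_outside:
  assumes "finite I" and "(\<Sum>i\<in>I. measure_pmf.prob p (B i)) < 1"
  shows "\<exists>x. \<forall>i\<in>I. x \<notin> B i"
proof (rule ccontr)
  assume "\<nexists>x. \<forall>i\<in>I. x \<notin> B i"
  then have "(\<Union>i\<in>I. B i) = UNIV" by auto
  then have "1 = measure_pmf.prob p (\<Union>i\<in>I. B i)" by simp
  also have "\<dots> \<le> (\<Sum>i\<in>I. measure_pmf.prob p (B i))"
    using assms(1) by (intro measure_pmf.finite_measure_subadditive_finite) auto
  finally show False using assms(2) by simp
qed

lemma sum_Pow_power_card: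
  fixes x :: "'a::comm_semiring_1"
  shows "finite V \<Longrightarrow> (\<Sum>A\<in>Pow V. x ^ card A) = (1 + x) ^ card V"
  using prod_add[of V "\<lambda>_. x" "\<lambda>_. 1"] by (simp add: add.commute)

lemma one_plus_inverse_power_le_exp_1: "(1 + 1 / real n) ^ n \<le> exp 1"
proof (cases "n = 0")
  case False
  have "(1 + 1 / real n) ^ n \<le> exp (1 / real n) ^ n"
    by (intro power_mono) (auto simp: exp_ge_add_one_self)
  also have "\<dots> = exp 1" using False by (simp flip: exp_of_nat_mult)
  finally show ?thesis .
qed simp

lemma exists_edge_balanced:
  assumes n: "4 \<le> n"
  shows "\<exists>f. edge_balanced n f"
proof -
  let ?M = "fair_coins (pairs_in {0..<n})"
  let ?bad = "\<lambda>A. {f. edge_deviation n A < \<bar>real (card {x \<in> pairs_in A. f x}) - real (card (pairs_in A)) / 2\<bar>}"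
  have "(\<Sum>A\<in>Pow {0..<n}. measure_pmf.prob ?M (?bad A)) \<le> (\<Sum>A\<in>Pow {0..<n}. (1 / n) ^ (card A + 1))"
    using n by (intro sum_mono prob_unbalanced_le) auto
  also have "\<dots> = 1 / n * (1 + 1 / n) ^ n"
    by (simp add: sum_Pow_power_card flip: sum_divide_distrib)
  also have "\<dots> \<le> 1 / n * 3"
    using one_plus_inverse_power_le_exp_1[of n] exp_le by (intro mult_left_mono) auto
  also have "\<dots> < 1" using n by simp
  finally have "\<exists>f. \<forall>A\<in>Pow {0..<n}. f \<notin> ?bad A"
    by (rule measure_pmf_exists_outside[rotated]) simp
  then obtain f where "\<forall>A\<in>Pow {0..<n}. f \<notin> ?bad A" ..
  then have "edge_balanced n f" by (simp add: edge_balanced_def not_less)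
  then show ?thesis by blast
qed

lemma locally_ramsey_mono:
  "locally_ramsey V E m r \<Longrightarrow> m \<le> m' \<Longrightarrow> locally_ramsey V E m' r"
  unfolding locally_ramsey_def by force

lemma locally_ramsey_if_card_less:
  "finite V \<Longrightarrow> real (card V) < m \<Longrightarrow> locally_ramsey V E m r"
  unfolding locally_ramsey_def by (meson card_mono not_le of_nat_le_iff order.strict_trans1)

lemma locally_ramsey_graph_of:
  assumes balanced: "edge_balanced n f" and n: "2 \<le> n" and r: "0 < r"
  shows "locally_ramsey {0..<n} (graph_of f) (2 powr (r + 6) * log 2 n) r"
  unfolding locally_ramsey_def
proof (intro allI impI conjI)
  fix S assume S: "S \<subseteq> {0..<n}" and big: "2 powr (r + 6) * log 2 n \<le> card S"
  have l: "1 \<le> log 2 (real n)" using n by simp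
  note clique = half_dense_clique_powr[OF simple_graph_graph_of[OF finite_atLeastLessThan]
      half_dense_graph_of[OF n] l r S big]
  show "\<exists>K\<subseteq>S. is_clique (graph_of f) K \<and> r \<le> card K"
    using clique[OF balanced] .
  show "\<exists>I\<subseteq>S. is_indep (graph_of f) I \<and> r \<le> card I"
    using clique[OF edge_balanced_complement[OF balanced]] is_indep_if_is_clique_complement by blast
qed

theorem proposition2p1:
  fixes n :: nat
  assumes "n \<ge> 1"
  shows "\<exists>E :: nat \<Rightarrow> nat \<Rightarrow> bool. simple_graph {0..<n} E \<and>
           (\<forall>r::real. r > 0 \<and> 2 powr (r + 8) * log 2 (real n) > 0 \<longrightarrow>
              locally_ramsey {0..<n} E (2 powr (r + 8) * log 2 (real n)) r)"
proof -
  obtain f where balanced: "4 \<le> n \<Longrightarrow> edge_balanced n f"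
    using exists_edge_balanced by metis
  show ?thesis
  proof (intro exI[of _ "graph_of f"] conjI allI impI)
    show "simple_graph {0..<n} (graph_of f)" by (simp add: simple_graph_graph_of)
    fix r :: real
    assume r: "r > 0 \<and> 2 powr (r + 8) * log 2 (real n) > 0"
    then have n: "2 \<le> n" using assms by (cases "n = 1") (auto simp: zero_less_mult_iff)
    then have l: "1 \<le> log 2 (real n)" by simp
    show "locally_ramsey {0..<n} (graph_of f) (2 powr (r + 8) * log 2 (real n)) r"
    proof (cases "4 \<le> n")
      case True
      have "2 powr (r + 6) * log 2 n \<le> 2 powr (r + 8) * log 2 n"
        using l by (intro mult_right_mono powr_mono) auto
      with locally_ramsey_graph_of[OF balanced[OF True] n] r show ?thesis
        by (blast intro: locally_ramsey_mono)
    next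
      case False
      have "256 * 1 \<le> 2 powr (r + 8) * log 2 n"
        using powr_mono[of 8 "r + 8" 2] r l by (intro mult_mono) auto
      with False show ?thesis by (intro locally_ramsey_if_card_less) auto
    qed
  qed
qed

end
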